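(* Let $G$ and $H$ be any graphs, and let $i_G$ be the number of isolated vertices of $G$. Then $$\rho_o(G\circ H)=\begin{cases}\rho_o(G)+i_G\rho_o(H)-i_G, & \text{if } H \text{ has an isolated vertex},\\ \rho(G)+i_G\rho_o(H)-i_G, & \text{otherwise.}\end{cases}$$
   Context: All graphs are finite and simple. A packing of $G$ is a set $P\subseteq V(G)$ with $N[u]\cap N[v]=\emptyset$ for all distinct $u,v\in P$ ($N[\cdot]$ the closed neighborhood); $\rho(G)$ is the maximum size of a packing. An open packing is a set $P$ whose vertices have pairwise disjoint open neighborhoods $N(\cdot)$; $\rho_o(G)$ is the maximum size of an open packing. The lexicographic product $G\circ H$ has vertex set $V(G)\times V(H)$, with $(g,h)$ adjacent to $(g',h')$ iff $gg'\in E(G)$, or ($g=g'$ and $hh'\in E(H)$). *)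

theory Defs
  imports Main
begin

definition graph :: "'a set \<Rightarrow> ('a \<Rightarrow> 'a \<Rightarrow> bool) \<Rightarrow> bool" where
  "graph V E \<longleftrightarrow> finite V \<and> (\<forall>u v. E u v \<longrightarrow> u \<in> V \<and> v \<in> V)
      \<and> (\<forall>u v. E u v \<longrightarrow> E v u) \<and> (\<forall>v. \<not> E v v)"

definition nbhd :: "'a set \<Rightarrow> ('a \<Rightarrow> 'a \<Rightarrow> bool) \<Rightarrow> 'a \<Rightarrow> 'a set" where
  "nbhd V E v = {u \<in> V. E v u}"

definition cnbhd :: "'a set \<Rightarrow> ('a \<Rightarrow> 'a \<Rightarrow> bool) \<Rightarrow> 'a \<Rightarrow> 'a set" where
  "cnbhd V E v = insert v (nbhd V E v)"

definition packing :: "'a set \<Rightarrow> ('a \<Rightarrow> 'a \<Rightarrow> bool) \<Rightarrow> 'a set \<Rightarrow> bool" where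
  "packing V E P \<longleftrightarrow> P \<subseteq> V \<and>
     (\<forall>u\<in>P. \<forall>v\<in>P. u \<noteq> v \<longrightarrow> cnbhd V E u \<inter> cnbhd V E v = {})"

definition open_packing :: "'a set \<Rightarrow> ('a \<Rightarrow> 'a \<Rightarrow> bool) \<Rightarrow> 'a set \<Rightarrow> bool" where
  "open_packing V E P \<longleftrightarrow> P \<subseteq> V \<and>
     (\<forall>u\<in>P. \<forall>v\<in>P. u \<noteq> v \<longrightarrow> nbhd V E u \<inter> nbhd V E v = {})"

definition packing_number :: "'a set \<Rightarrow> ('a \<Rightarrow> 'a \<Rightarrow> bool) \<Rightarrow> nat" where
  "packing_number V E = Max (card ` {P. packing V E P})"

definition open_packing_number :: "'a set \<Rightarrow> ('a \<Rightarrow> 'a \<Rightarrow> bool) \<Rightarrow> nat" where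
  "open_packing_number V E = Max (card ` {P. open_packing V E P})"

definition isolated_vertices :: "'a set \<Rightarrow> ('a \<Rightarrow> 'a \<Rightarrow> bool) \<Rightarrow> 'a set" where
  "isolated_vertices V E = {v \<in> V. nbhd V E v = {}}"

definition lex_adj :: "'a set \<Rightarrow> 'b set \<Rightarrow> ('a \<Rightarrow> 'a \<Rightarrow> bool) \<Rightarrow> ('b \<Rightarrow> 'b \<Rightarrow> bool)
    \<Rightarrow> ('a \<times> 'b) \<Rightarrow> ('a \<times> 'b) \<Rightarrow> bool" where
  "lex_adj V1 V2 E1 E2 x y \<longleftrightarrow> x \<in> V1 \<times> V2 \<and> y \<in> V1 \<times> V2 \<and>
     (E1 (fst x) (fst y) \<or> (fst x = fst y \<and> E2 (snd x) (snd y)))"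

end

theory Submission
  imports Defs
begin

text \<open>In G \<circ> H the neighbourhood of (g, h) is N(g) \<times> V(H) \<union> {g} \<times> N(h). Hence an open
  packing P of G \<circ> H has at most one vertex over each non-isolated vertex g of G, and its fibre
  over an isolated vertex of G is an open packing of H. Projecting P to G and adding the
  isolated vertices I of G gives an open packing of G; if H has no isolated vertex it is even a
  packing, since for an edge g g' of G the vertices (g, h) and (g', h') would share the
  neighbour (g', y) for any neighbour y of h'. Conversely, if Q is an open packing of G,
  R a maximum open packing of H and h0 a vertex of H, then (Q - I) \<times> {h0} \<union> I \<times> R is an open
  packing of G \<circ> H provided h0 is isolated or Q spans no edge, i.e. Q is a packing.\<close>

lemma card_le_Max_card_subsets:
  assumes "finite V" and "\<And>P. \<Pi> P \<Longrightarrow> P \<subseteq> V" and "\<Pi> P"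
  shows "card P \<le> Max (card ` Collect \<Pi>)"
proof -
  have "Collect \<Pi> \<subseteq> Pow V" using assms(2) by auto
  then have "finite (Collect \<Pi>)" using assms(1) by (simp add: finite_subset)
  then show ?thesis using assms(3) by auto
qed

lemma Max_card_subsets_attained:
  assumes "finite V" and "\<And>P. \<Pi> P \<Longrightarrow> P \<subseteq> V" and "\<Pi> {}"
  obtains P where "\<Pi> P" and "card P = Max (card ` Collect \<Pi>)"
proof -
  have "Collect \<Pi> \<subseteq> Pow V" using assms(2) by auto
  then have "finite (Collect \<Pi>)" using assms(1) by (simp add: finite_subset)
  then have "Max (card ` Collect \<Pi>) \<in> card ` Collect \<Pi>"
    using assms(3) by (intro Max_in) auto
  then show ?thesis using that by auto
qed

lemma card_le_open_packing_number:
  "graph V E \<Longrightarrow> open_packing V E P \<Longrightarrow> card P \<le> open_packing_number V E"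
  unfolding open_packing_number_def
  by (rule card_le_Max_card_subsets) (auto simp: graph_def open_packing_def)

lemma open_packing_number_attained:
  assumes "graph V E"
  obtains P where "open_packing V E P" and "card P = open_packing_number V E"
proof (rule Max_card_subsets_attained[of V "open_packing V E"])
  show "finite V" using assms by (simp add: graph_def)
qed (auto simp: open_packing_def intro: that[unfolded open_packing_number_def])

lemma card_le_packing_number:
  "graph V E \<Longrightarrow> packing V E P \<Longrightarrow> card P \<le> packing_number V E"
  unfolding packing_number_def
  by (rule card_le_Max_card_subsets) (auto simp: graph_def packing_def)

lemma packing_number_attained:
  assumes "graph V E"
  obtains P where "packing V E P" and "card P = packing_number V E"
proof (rule Max_card_subsets_attained[of V "packing V E"])
  show "finite V" using assms by (simp add: graph_def)
qed (auto simp: packing_def intro: that[unfolded packing_number_def])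

lemma packing_imp_open_packing: "packing V E P \<Longrightarrow> open_packing V E P"
  by (auto simp: packing_def open_packing_def cnbhd_def)

lemma packing_no_edge:
  assumes "graph V E" "packing V E P" "u \<in> P" "v \<in> P"
  shows "\<not> E u v"
proof
  assume "E u v"
  then have "u \<noteq> v" using assms(1) by (auto simp: graph_def)
  moreover have "v \<in> cnbhd V E u \<inter> cnbhd V E v"
    using \<open>E u v\<close> assms(1) by (auto simp: graph_def cnbhd_def nbhd_def)
  ultimately show False using assms(2-4) by (auto simp: packing_def)
qed

lemma isolated_vertices_subset: "isolated_vertices V E \<subseteq> V"
  by (auto simp: isolated_vertices_def)

lemma finite_isolated_vertices: "graph V E \<Longrightarrow> finite (isolated_vertices V E)"
  using isolated_vertices_subset finite_subset by (fastforce simp: graph_def)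

lemma isolated_vertices_no_edge:
  assumes "graph V E" "v \<in> isolated_vertices V E"
  shows "\<not> E v u" and "\<not> E u v"
  using assms unfolding graph_def isolated_vertices_def nbhd_def by blast+

lemma open_packing_Un_isolated_vertices:
  "open_packing V E P \<Longrightarrow> open_packing V E (P \<union> isolated_vertices V E)"
  by (auto simp: open_packing_def isolated_vertices_def)

lemma packing_Un_isolated_vertices:
  assumes "graph V E" "packing V E P"
  shows "packing V E (P \<union> isolated_vertices V E)"
  unfolding packing_def
proof (intro conjI ballI impI)
  show "P \<union> isolated_vertices V E \<subseteq> V"
    using assms(2) isolated_vertices_subset[of V E] by (auto simp: packing_def)
  have isolated: "cnbhd V E x \<inter> cnbhd V E y = {}"
    if "x \<in> isolated_vertices V E" "x \<noteq> y" for x y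
  proof -
    have "cnbhd V E x = {x}" using that(1) by (simp add: cnbhd_def isolated_vertices_def)
    moreover have "x \<notin> cnbhd V E y"
      using that isolated_vertices_no_edge(2)[OF assms(1) that(1)] by (simp add: cnbhd_def nbhd_def)
    ultimately show ?thesis by auto
  qed
  fix u v assume "u \<in> P \<union> isolated_vertices V E" "v \<in> P \<union> isolated_vertices V E" "u \<noteq> v"
  then consider "u \<in> isolated_vertices V E" | "v \<in> isolated_vertices V E" | "u \<in> P" "v \<in> P"
    by blast
  then show "cnbhd V E u \<inter> cnbhd V E v = {}"
    using isolated[of u v] isolated[of v u] assms(2) \<open>u \<noteq> v\<close>
    by cases (auto simp: packing_def)
qed

lemma graph_lex_adj:
  "graph VG EG \<Longrightarrow> graph VH EH \<Longrightarrow> graph (VG \<times> VH) (lex_adj VG VH EG EH)"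
  by (auto simp: graph_def lex_adj_def)

lemma nbhd_lex_adj:
  assumes "g \<in> VG" and "h \<in> VH"
  shows "nbhd (VG \<times> VH) (lex_adj VG VH EG EH) (g, h)
           = nbhd VG EG g \<times> VH \<union> {g} \<times> nbhd VH EH h"
  using assms by (auto simp: nbhd_def lex_adj_def)

lemma lex_nbhds_disjoint_iff:
  assumes "g \<in> VG" "g' \<in> VG" "h \<in> VH" "h' \<in> VH"
  shows "nbhd (VG \<times> VH) (lex_adj VG VH EG EH) (g, h)
           \<inter> nbhd (VG \<times> VH) (lex_adj VG VH EG EH) (g', h') = {}
         \<longleftrightarrow> nbhd VG EG g \<inter> nbhd VG EG g' = {}
           \<and> (EG g g' \<longrightarrow> nbhd VH EH h' = {})
           \<and> (EG g' g \<longrightarrow> nbhd VH EH h = {})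
           \<and> (g = g' \<longrightarrow> nbhd VH EH h \<inter> nbhd VH EH h' = {})"
  using assms unfolding nbhd_lex_adj[OF assms(1,3)] nbhd_lex_adj[OF assms(2,4)]
  by (auto simp: nbhd_def)

lemma open_packing_lex_disjoint:
  assumes "open_packing (VG \<times> VH) (lex_adj VG VH EG EH) P"
    and "(g, h) \<in> P" "(g', h') \<in> P" "(g, h) \<noteq> (g', h')"
  shows "nbhd VG EG g \<inter> nbhd VG EG g' = {}"
    and "EG g g' \<Longrightarrow> nbhd VH EH h' = {}"
    and "g = g' \<Longrightarrow> nbhd VH EH h \<inter> nbhd VH EH h' = {}"
proof -
  have "g \<in> VG" "g' \<in> VG" "h \<in> VH" "h' \<in> VH"
    using assms(1-3) by (auto simp: open_packing_def)
  moreover have "nbhd (VG \<times> VH) (lex_adj VG VH EG EH) (g, h)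
           \<inter> nbhd (VG \<times> VH) (lex_adj VG VH EG EH) (g', h') = {}"
    using assms unfolding open_packing_def by blast
  ultimately show "nbhd VG EG g \<inter> nbhd VG EG g' = {}"
    and "EG g g' \<Longrightarrow> nbhd VH EH h' = {}"
    and "g = g' \<Longrightarrow> nbhd VH EH h \<inter> nbhd VH EH h' = {}"
    by (simp_all add: lex_nbhds_disjoint_iff)
qed

lemma open_packing_lex_fst:
  assumes "open_packing (VG \<times> VH) (lex_adj VG VH EG EH) P"
  shows "open_packing VG EG (fst ` P)"
  using assms open_packing_lex_disjoint(1)[OF assms]
  unfolding open_packing_def by fastforce

lemma packing_lex_fst:
  assumes "open_packing (VG \<times> VH) (lex_adj VG VH EG EH) P"
    and "isolated_vertices VH EH = {}"
  shows "packing VG EG (fst ` P)"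
  unfolding packing_def
proof (intro conjI ballI impI)
  show "fst ` P \<subseteq> VG" using assms(1) by (auto simp: open_packing_def)
  fix u v assume "u \<in> fst ` P" "v \<in> fst ` P" "u \<noteq> v"
  then obtain h h' where uv: "(u, h) \<in> P" "(v, h') \<in> P" "(u, h) \<noteq> (v, h')" by force
  have "h \<in> VH" "h' \<in> VH" using uv assms(1) by (auto simp: open_packing_def)
  then have "nbhd VH EH h \<noteq> {}" "nbhd VH EH h' \<noteq> {}"
    using assms(2) by (auto simp: isolated_vertices_def)
  then have "\<not> EG u v" "\<not> EG v u"
    using open_packing_lex_disjoint(2)[OF assms(1) uv] open_packing_lex_disjoint(2)[OF assms(1) uv(2,1)]
      uv(3) by auto
  then show "cnbhd VG EG u \<inter> cnbhd VG EG v = {}"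
    using open_packing_lex_disjoint(1)[OF assms(1) uv] \<open>u \<noteq> v\<close>
    by (auto simp: cnbhd_def nbhd_def)
qed

lemma open_packing_lex_fibre:
  assumes "open_packing (VG \<times> VH) (lex_adj VG VH EG EH) P"
  shows "open_packing VH EH {h. (g, h) \<in> P}"
  using assms open_packing_lex_disjoint(3)[OF assms]
  unfolding open_packing_def by fastforce

lemma inj_on_fst_open_packing_lex:
  assumes "open_packing (VG \<times> VH) (lex_adj VG VH EG EH) P"
  shows "inj_on fst {p \<in> P. fst p \<notin> isolated_vertices VG EG}"
proof (rule inj_onI, clarsimp)
  fix g h h' assume "(g, h) \<in> P" "(g, h') \<in> P" "g \<notin> isolated_vertices VG EG"
  moreover have "g \<in> VG" using \<open>(g, h) \<in> P\<close> assms by (auto simp: open_packing_def)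
  ultimately show "h = h'"
    using open_packing_lex_disjoint(1)[OF assms, of g h g h']
    by (auto simp: isolated_vertices_def)
qed

lemma card_open_packing_lex_le:
  assumes "graph VG EG" "graph VH EH"
    and P: "open_packing (VG \<times> VH) (lex_adj VG VH EG EH) P"
  defines "I \<equiv> isolated_vertices VG EG"
  shows "card P + card I \<le> card (fst ` P \<union> I) + card I * open_packing_number VH EH"
proof -
  define PN where "PN = {p \<in> P. fst p \<notin> I}"
  define PI where "PI = {p \<in> P. fst p \<in> I}"
  have "finite (VG \<times> VH)" "P \<subseteq> VG \<times> VH"
    using assms(1,2) P by (simp_all add: graph_def open_packing_def)
  then have fin: "finite P" "finite I"
    using finite_isolated_vertices[OF assms(1)] finite_subset unfolding I_def by blast+
  have "card P = card PN + card PI"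
  proof -
    have "P = PN \<union> PI" "PN \<inter> PI = {}" by (auto simp: PN_def PI_def)
    moreover have "finite PN" "finite PI" using fin(1) by (simp_all add: PN_def PI_def)
    ultimately show ?thesis by (simp add: card_Un_disjoint)
  qed
  moreover have "card PN = card (fst ` P - I)"
  proof -
    have "fst ` PN = fst ` P - I" by (force simp: PN_def)
    then show ?thesis
      using card_image[OF inj_on_fst_open_packing_lex[OF P]] by (simp add: PN_def I_def)
  qed
  moreover have "card PI \<le> card I * open_packing_number VH EH"
  proof -
    have "PI = (SIGMA g:I. {h. (g, h) \<in> P})" by (auto simp: PI_def)
    moreover have "finite {h. (g, h) \<in> P}" for g
    proof (rule finite_subset)
      show "{h. (g, h) \<in> P} \<subseteq> snd ` P" by force
    qed (use fin(1) in simp)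
    ultimately have "card PI = (\<Sum>g\<in>I. card {h. (g, h) \<in> P})" using fin by simp
    also have "\<dots> \<le> (\<Sum>g\<in>I. open_packing_number VH EH)"
      by (intro sum_mono card_le_open_packing_number[OF assms(2)] open_packing_lex_fibre[OF P])
    finally show ?thesis by simp
  qed
  moreover have "card (fst ` P - I) + card I = card (fst ` P \<union> I)"
    using fin by (subst card_Un_disjoint[symmetric]) auto
  ultimately show ?thesis by linarith
qed

lemma open_packing_lex_of_open_packings:
  assumes "graph VG EG"
    and Q: "open_packing VG EG Q" and QI: "Q \<inter> isolated_vertices VG EG = {}"
    and h0: "h0 \<in> VH" and edge: "\<And>u v. u \<in> Q \<Longrightarrow> v \<in> Q \<Longrightarrow> EG u v \<Longrightarrow> nbhd VH EH h0 = {}"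
    and R: "open_packing VH EH R"
  shows "open_packing (VG \<times> VH) (lex_adj VG VH EG EH) (Q \<times> {h0} \<union> isolated_vertices VG EG \<times> R)"
  unfolding open_packing_def
proof (intro conjI ballI impI)
  let ?I = "isolated_vertices VG EG"
  have "Q \<subseteq> VG" "R \<subseteq> VH" using Q R by (simp_all add: open_packing_def)
  then show sub: "Q \<times> {h0} \<union> ?I \<times> R \<subseteq> VG \<times> VH"
    using h0 isolated_vertices_subset[of VG EG] by blast
  fix p q assume pq: "p \<in> Q \<times> {h0} \<union> ?I \<times> R" "q \<in> Q \<times> {h0} \<union> ?I \<times> R" "p \<noteq> q"
  obtain g h g' h' where [simp]: "p = (g, h)" "q = (g', h')" by fastforce
  have V: "g \<in> VG" "g' \<in> VG" "h \<in> VH" "h' \<in> VH" using pq sub by auto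
  have iso: "x \<in> ?I \<Longrightarrow> nbhd VG EG x = {}" for x by (simp add: isolated_vertices_def)
  have over_Q: "g \<in> Q" "g' \<in> Q" "h = h0" "h' = h0" if "g \<notin> ?I" "g' \<notin> ?I"
    using pq that by auto
  show "nbhd (VG \<times> VH) (lex_adj VG VH EG EH) p \<inter> nbhd (VG \<times> VH) (lex_adj VG VH EG EH) q = {}"
    unfolding \<open>p = (g, h)\<close> \<open>q = (g', h')\<close> lex_nbhds_disjoint_iff[OF V]
  proof (intro conjI impI)
    show "nbhd VG EG g \<inter> nbhd VG EG g' = {}"
    proof (cases "g \<in> ?I \<or> g' \<in> ?I")
      case True
      then show ?thesis using iso by auto
    next
      case False
      then have "g \<in> Q" "g' \<in> Q" "g \<noteq> g'" using over_Q pq(3) by auto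
      then show ?thesis using Q unfolding open_packing_def by blast
    qed
    show "nbhd VH EH h' = {}" if "EG g g'"
    proof -
      have "g \<notin> ?I" "g' \<notin> ?I" using that isolated_vertices_no_edge[OF assms(1)] by blast+
      from over_Q[OF this] show ?thesis using edge that by blast
    qed
    show "nbhd VH EH h = {}" if "EG g' g"
    proof -
      have "g \<notin> ?I" "g' \<notin> ?I" using that isolated_vertices_no_edge[OF assms(1)] by blast+
      from over_Q[OF this] show ?thesis using edge that by blast
    qed
    show "nbhd VH EH h \<inter> nbhd VH EH h' = {}" if "g = g'"
    proof -
      have "h \<in> R" "h' \<in> R" "h \<noteq> h'" using that pq QI by auto
      then show ?thesis using R unfolding open_packing_def by blast
    qed
  qed
qed

lemma card_open_packing_le_open_packing_number_lex:
  assumes gG: "graph VG EG" and gH: "graph VH EH"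
    and Q: "open_packing VG EG Q" and h0: "h0 \<in> VH"
    and edge: "\<And>u v. u \<in> Q \<Longrightarrow> v \<in> Q \<Longrightarrow> EG u v \<Longrightarrow> nbhd VH EH h0 = {}"
  defines "I \<equiv> isolated_vertices VG EG"
  shows "card Q + card I * open_packing_number VH EH
           \<le> open_packing_number (VG \<times> VH) (lex_adj VG VH EG EH) + card I"
proof -
  obtain R where R: "open_packing VH EH R" "card R = open_packing_number VH EH"
    using open_packing_number_attained[OF gH] .
  have "open_packing VG EG (Q - I)" using Q by (auto simp: open_packing_def)
  then have "open_packing (VG \<times> VH) (lex_adj VG VH EG EH) ((Q - I) \<times> {h0} \<union> I \<times> R)"
    unfolding I_def using edge by (intro open_packing_lex_of_open_packings[OF gG _ _ h0 _ R(1)]) auto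
  then have "card ((Q - I) \<times> {h0} \<union> I \<times> R) \<le> open_packing_number (VG \<times> VH) (lex_adj VG VH EG EH)"
    by (rule card_le_open_packing_number[OF graph_lex_adj[OF gG gH]])
  moreover have fin: "finite Q" "finite I" "finite R"
    using gG gH Q R finite_isolated_vertices[OF gG] finite_subset
    unfolding I_def open_packing_def graph_def by blast+
  then have "card ((Q - I) \<times> {h0} \<union> I \<times> R) = card (Q - I) + card I * card R"
    by (subst card_Un_disjoint) (auto simp: card_cartesian_product)
  moreover have "card Q - card I \<le> card (Q - I)" using diff_card_le_card_Diff[OF fin(2)] .
  ultimately show ?thesis unfolding R(2)[symmetric] by linarith
qed

lemma open_packing_number_lex_le:
  assumes "graph VG EG" "graph VH EH"
  shows "open_packing_number (VG \<times> VH) (lex_adj VG VH EG EH) + card (isolated_vertices VG EG)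
           \<le> open_packing_number VG EG + card (isolated_vertices VG EG) * open_packing_number VH EH"
proof -
  obtain P where P: "open_packing (VG \<times> VH) (lex_adj VG VH EG EH) P"
      "card P = open_packing_number (VG \<times> VH) (lex_adj VG VH EG EH)"
    using open_packing_number_attained[OF graph_lex_adj[OF assms]] .
  have "card (fst ` P \<union> isolated_vertices VG EG) \<le> open_packing_number VG EG"
    by (intro card_le_open_packing_number open_packing_Un_isolated_vertices
        open_packing_lex_fst[OF P(1)] assms(1))
  then show ?thesis using card_open_packing_lex_le[OF assms P(1)] P(2) by linarith
qed

lemma open_packing_number_lex_le_packing_number:
  assumes "graph VG EG" "graph VH EH" and "isolated_vertices VH EH = {}"
  shows "open_packing_number (VG \<times> VH) (lex_adj VG VH EG EH) + card (isolated_vertices VG EG)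
           \<le> packing_number VG EG + card (isolated_vertices VG EG) * open_packing_number VH EH"
proof -
  obtain P where P: "open_packing (VG \<times> VH) (lex_adj VG VH EG EH) P"
      "card P = open_packing_number (VG \<times> VH) (lex_adj VG VH EG EH)"
    using open_packing_number_attained[OF graph_lex_adj[OF assms(1,2)]] .
  have "card (fst ` P \<union> isolated_vertices VG EG) \<le> packing_number VG EG"
    by (intro card_le_packing_number packing_Un_isolated_vertices
        packing_lex_fst[OF P(1) assms(3)] assms(1))
  then show ?thesis using card_open_packing_lex_le[OF assms(1,2) P(1)] P(2) by linarith
qed

lemma open_packing_number_le_lex:
  assumes "graph VG EG" "graph VH EH" and "h0 \<in> isolated_vertices VH EH"
  shows "open_packing_number VG EG + card (isolated_vertices VG EG) * open_packing_number VH EH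
           \<le> open_packing_number (VG \<times> VH) (lex_adj VG VH EG EH) + card (isolated_vertices VG EG)"
proof -
  obtain Q where Q: "open_packing VG EG Q" "card Q = open_packing_number VG EG"
    using open_packing_number_attained[OF assms(1)] .
  have h0: "h0 \<in> VH" "nbhd VH EH h0 = {}" using assms(3) by (simp_all add: isolated_vertices_def)
  have "card Q + card (isolated_vertices VG EG) * open_packing_number VH EH
          \<le> open_packing_number (VG \<times> VH) (lex_adj VG VH EG EH) + card (isolated_vertices VG EG)"
    by (rule card_open_packing_le_open_packing_number_lex[OF assms(1,2) Q(1) h0(1)]) (rule h0(2))
  then show ?thesis using Q(2) by simp
qed

lemma packing_number_le_lex:
  assumes "graph VG EG" "graph VH EH" and "VH \<noteq> {}"
  shows "packing_number VG EG + card (isolated_vertices VG EG) * open_packing_number VH EH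
           \<le> open_packing_number (VG \<times> VH) (lex_adj VG VH EG EH) + card (isolated_vertices VG EG)"
proof -
  obtain h0 where h0: "h0 \<in> VH" using assms(3) by blast
  obtain Q where Q: "packing VG EG Q" "card Q = packing_number VG EG"
    using packing_number_attained[OF assms(1)] .
  have "card Q + card (isolated_vertices VG EG) * open_packing_number VH EH
          \<le> open_packing_number (VG \<times> VH) (lex_adj VG VH EG EH) + card (isolated_vertices VG EG)"
    by (rule card_open_packing_le_open_packing_number_lex[OF assms(1,2) packing_imp_open_packing[OF Q(1)] h0])
      (use packing_no_edge[OF assms(1) Q(1)] in blast)
  then show ?thesis using Q(2) by simp
qed

theorem mainTheorem9:
  fixes VG :: "'a set" and EG :: "'a \<Rightarrow> 'a \<Rightarrow> bool"
    and VH :: "'b set" and EH :: "'b \<Rightarrow> 'b \<Rightarrow> bool"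
  assumes "graph VG EG" and "VG \<noteq> {}"
    and "graph VH EH" and "VH \<noteq> {}"
  shows "int (open_packing_number (VG \<times> VH) (lex_adj VG VH EG EH)) =
    (if isolated_vertices VH EH \<noteq> {}
     then int (open_packing_number VG EG)
          + int (card (isolated_vertices VG EG)) * int (open_packing_number VH EH)
          - int (card (isolated_vertices VG EG))
     else int (packing_number VG EG)
          + int (card (isolated_vertices VG EG)) * int (open_packing_number VH EH)
          - int (card (isolated_vertices VG EG)))"
proof (cases "isolated_vertices VH EH = {}")
  case True
  have "open_packing_number (VG \<times> VH) (lex_adj VG VH EG EH) + card (isolated_vertices VG EG)
      = packing_number VG EG + card (isolated_vertices VG EG) * open_packing_number VH EH"
    using open_packing_number_lex_le_packing_number[OF assms(1,3) True]
      packing_number_le_lex[OF assms(1,3,4)] by (rule antisym)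
  from arg_cong[where f = int, OF this] True show ?thesis by simp
next
  case False
  then obtain h0 where h0: "h0 \<in> isolated_vertices VH EH" by blast
  have "open_packing_number (VG \<times> VH) (lex_adj VG VH EG EH) + card (isolated_vertices VG EG)
      = open_packing_number VG EG + card (isolated_vertices VG EG) * open_packing_number VH EH"
    using open_packing_number_lex_le[OF assms(1,3)]
      open_packing_number_le_lex[OF assms(1,3) h0] by (rule antisym)
  from arg_cong[where f = int, OF this] False show ?thesis by simp
qed

end
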